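(* Let $F$ be a field and $r,s\ge1$ integers. If $|F|\ge\min\{r,s\}+2$, then there exist matrices $A\in F^{r\times r}$ and $B\in F^{s\times s}$ such that $C(A,B)$ has dimension $\min\{r,s\}$ and minimum distance $\max\{r,s\}$.
   Context: $C(A,B):=\{X\in F^{r\times s}\mid AX=XB\}$, viewed as a linear code of length $rs$ by regarding each matrix as the vector of its $rs$ entries. The minimum (Hamming) distance of a subspace $C$ is $\min\{\text{number of nonzero entries of }w\mid w\in C,\ w\neq0\}$. *)

theory Defs
  imports "Jordan_Normal_Form.VS_Connect"
begin

definition centralizer_code :: "'a::field mat \<Rightarrow> 'a mat \<Rightarrow> 'a mat set" where
  "centralizer_code A B = {X \<in> carrier_mat (dim_row A) (dim_row B). A * X = X * B}"

definition mat_subspace_dim :: "nat \<Rightarrow> nat \<Rightarrow> 'a::field mat set \<Rightarrow> nat" where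
  "mat_subspace_dim r s W =
     vectorspace.dim (class_ring :: 'a ring) ((module_mat TYPE('a) r s)\<lparr>carrier := W\<rparr>)"

definition mat_weight :: "'a::zero mat \<Rightarrow> nat" where
  "mat_weight X = card {(i, j). i < dim_row X \<and> j < dim_col X \<and> X $$ (i, j) \<noteq> 0}"

definition min_distance :: "nat \<Rightarrow> nat \<Rightarrow> 'a::zero mat set \<Rightarrow> nat" where
  "min_distance r s C = Min (mat_weight ` {X \<in> C. X \<noteq> 0\<^sub>m r s})"

end

theory Submission
  imports Defs
begin

(* For r <= s take A = 1 and B the transposed cyclic shift of F^s.  Then AX = XB says that every
   row of X is invariant under cyclically shifting its entries, hence constant, so C(A,B) is the
   code of matrices with constant rows: it has dimension r, and a nonzero codeword has a whole
   nonzero row, so weight at least s, with equality for a single nonzero row.  For r > s the roles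
   of rows and columns are exchanged.  The construction works over every field. *)

lemma mat_subspace_dim_inj_linear_image:
  fixes T :: "'a::field vec \<Rightarrow> 'a mat"
  assumes carrier: "\<And>u. u \<in> carrier_vec m \<Longrightarrow> T u \<in> carrier_mat r s"
    and add: "\<And>u v. u \<in> carrier_vec m \<Longrightarrow> v \<in> carrier_vec m \<Longrightarrow> T (u + v) = T u + T v"
    and smult: "\<And>k u. u \<in> carrier_vec m \<Longrightarrow> T (k \<cdot>\<^sub>v u) = k \<cdot>\<^sub>m T u"
    and inj: "\<And>u. u \<in> carrier_vec m \<Longrightarrow> T u = 0\<^sub>m r s \<Longrightarrow> u = 0\<^sub>v m"
  shows "mat_subspace_dim r s (T ` carrier_vec m) = m"
proof -
  interpret V: vec_space "TYPE('a)" m .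
  interpret lm: linear_map "class_ring :: 'a ring" "module_vec TYPE('a) m" "module_mat TYPE('a) r s" T
  proof -
    have "T \<in> LinearCombinations.module_hom class_ring (module_vec TYPE('a) m) (module_mat TYPE('a) r s)"
      unfolding LinearCombinations.module_hom_def using carrier add smult
      by (auto simp: module_vec_simps module_mat_simps)
    then show "linear_map class_ring (module_vec TYPE('a) m) (module_mat TYPE('a) r s) T"
      using vec_vs matrix_vs
      unfolding linear_map_def mod_hom_def mod_hom_axioms_def vectorspace_def by auto
  qed
  have rank_nullity:
    "vectorspace.dim class_ring ((module_mat TYPE('a) r s)\<lparr>carrier := lm.imT\<rparr>)
       + vectorspace.dim class_ring ((module_vec TYPE('a) m)\<lparr>carrier := lm.kerT\<rparr>) = m"
    using lm.rank_nullity[OF V.fin_dim] V.dim_is_n by simp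
  have "T (0\<^sub>v m) = 0\<^sub>m r s"
    using lm.T0_is_0 by (simp add: module_vec_simps module_mat_simps)
  then have ker: "lm.kerT = {0\<^sub>v m}"
    using inj unfolding mod_hom.ker_def[OF lm.mod_hom_axioms]
    by (auto simp: module_vec_simps module_mat_simps)
  have im: "lm.imT = T ` carrier_vec m"
    unfolding mod_hom.im_def[OF lm.mod_hom_axioms] by (simp add: module_vec_simps)
  interpret K: vectorspace "class_ring :: 'a ring" "(module_vec TYPE('a) m)\<lparr>carrier := lm.kerT\<rparr>"
    by (rule V.subspace_is_vs[OF lm.kerT_is_subspace])
  have "K.span {} = {0\<^sub>v m}"
    unfolding K.span_def K.lincomb_def by (simp add: module_vec_simps)
  then have "K.basis {}"
    unfolding K.basis_def K.lin_dep_def using ker by simp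
  then have "vectorspace.dim class_ring ((module_vec TYPE('a) m)\<lparr>carrier := lm.kerT\<rparr>) = 0"
    using K.dim_basis[of "{}"] by simp
  then show ?thesis
    using rank_nullity im unfolding mat_subspace_dim_def by simp
qed

lemma mat_weight_le: "mat_weight X \<le> dim_row X * dim_col X"
proof -
  have "mat_weight X \<le> card ({..<dim_row X} \<times> {..<dim_col X})"
    unfolding mat_weight_def by (rule card_mono) auto
  then show ?thesis by (simp add: card_cartesian_product)
qed

lemma mat_weight_eq_0_iff:
  assumes "X \<in> carrier_mat r s"
  shows "mat_weight X = 0 \<longleftrightarrow> X = 0\<^sub>m r s"
proof -
  have "finite {(i, j). i < dim_row X \<and> j < dim_col X \<and> X $$ (i, j) \<noteq> 0}"
    by (rule finite_subset[of _ "{..<dim_row X} \<times> {..<dim_col X}"]) auto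
  then show ?thesis
    using assms unfolding mat_weight_def by (auto simp: mat_eq_iff)
qed

lemma min_distance_eqI:
  assumes "C \<subseteq> carrier_mat r s"
    and "\<And>X. X \<in> C \<Longrightarrow> X \<noteq> 0\<^sub>m r s \<Longrightarrow> n \<le> mat_weight X"
    and "X \<in> C" "X \<noteq> 0\<^sub>m r s" "mat_weight X = n"
  shows "min_distance r s C = n"
  unfolding min_distance_def
proof (rule Min_eqI)
  have "mat_weight ` {X \<in> C. X \<noteq> 0\<^sub>m r s} \<subseteq> {..r * s}"
  proof
    fix w assume "w \<in> mat_weight ` {X \<in> C. X \<noteq> 0\<^sub>m r s}"
    then obtain X where "X \<in> C" "w = mat_weight X" by blast
    then show "w \<in> {..r * s}"
      using assms(1) mat_weight_le[of X] by auto
  qed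
  then show "finite (mat_weight ` {X \<in> C. X \<noteq> 0\<^sub>m r s})"
    using finite_subset by blast
qed (use assms in auto)

lemma code_with_proportional_weights:
  fixes T :: "'a::field vec \<Rightarrow> 'a mat"
  assumes carrier: "\<And>u. u \<in> carrier_vec m \<Longrightarrow> T u \<in> carrier_mat r s"
    and add: "\<And>u v. u \<in> carrier_vec m \<Longrightarrow> v \<in> carrier_vec m \<Longrightarrow> T (u + v) = T u + T v"
    and smult: "\<And>k u. u \<in> carrier_vec m \<Longrightarrow> T (k \<cdot>\<^sub>v u) = k \<cdot>\<^sub>m T u"
    and weight: "\<And>c. c \<in> carrier_vec m \<Longrightarrow> mat_weight (T c) = n * card {i. i < m \<and> c $ i \<noteq> 0}"
    and "0 < m" "0 < n"
  shows "mat_subspace_dim r s (T ` carrier_vec m) = m"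
    and "min_distance r s (T ` carrier_vec m) = n"
proof -
  have support_empty_iff: "{i. i < m \<and> c $ i \<noteq> 0} = {} \<longleftrightarrow> c = 0\<^sub>v m"
    if "c \<in> carrier_vec m" for c :: "'a vec"
    using that by (auto simp: vec_eq_iff)
  have zero_iff: "T c = 0\<^sub>m r s \<longleftrightarrow> c = 0\<^sub>v m" if c: "c \<in> carrier_vec m" for c
    using mat_weight_eq_0_iff[OF carrier[OF c]] weight[OF c] support_empty_iff[OF c] \<open>0 < n\<close>
    by simp
  show "mat_subspace_dim r s (T ` carrier_vec m) = m"
    by (rule mat_subspace_dim_inj_linear_image[OF carrier add smult]) (use zero_iff in simp_all)
  show "min_distance r s (T ` carrier_vec m) = n"
  proof (rule min_distance_eqI)
    show "T ` carrier_vec m \<subseteq> carrier_mat r s" using carrier by blast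
    show "n \<le> mat_weight X" if X: "X \<in> T ` carrier_vec m" "X \<noteq> 0\<^sub>m r s" for X
    proof -
      obtain c where c: "c \<in> carrier_vec m" "X = T c" using X(1) by blast
      have "{i. i < m \<and> c $ i \<noteq> 0} \<noteq> {}"
        using c zero_iff support_empty_iff X(2) by blast
      then have "card {i. i < m \<and> c $ i \<noteq> 0} \<ge> 1"
        by (simp add: Suc_le_eq card_gt_0_iff)
      then show ?thesis using weight c by simp
    qed
    have "{i. i < m \<and> unit_vec m 0 $ i \<noteq> (0::'a)} = {0}"
      using \<open>0 < m\<close> by (auto split: if_splits)
    then show "mat_weight (T (unit_vec m 0)) = n"
      using weight[of "unit_vec m 0"] by simp
    show "T (unit_vec m 0) \<noteq> 0\<^sub>m r s"
      using zero_iff[of "unit_vec m 0"] \<open>0 < m\<close> by (auto simp: vec_eq_iff)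
  qed simp
qed

definition cyclic_shift_mat :: "nat \<Rightarrow> 'a::semiring_1 mat" where
  "cyclic_shift_mat n = mat n n (\<lambda>(i, j). if j = Suc i mod n then 1 else 0)"

lemma dim_cyclic_shift_mat [simp]:
  "dim_row (cyclic_shift_mat n) = n" "dim_col (cyclic_shift_mat n) = n"
  by (simp_all add: cyclic_shift_mat_def)

lemma cyclic_shift_mat_carrier: "cyclic_shift_mat n \<in> carrier_mat n n"
  by (simp add: carrier_matI)

lemma cyclic_shift_mat_mult_index:
  assumes "dim_row X = n" "i < n" "j < dim_col X"
  shows "(cyclic_shift_mat n * X) $$ (i, j) = X $$ (Suc i mod n, j)"
proof -
  have "(cyclic_shift_mat n * X) $$ (i, j)
      = (\<Sum>k\<in>{0..<n}. (if k = Suc i mod n then 1 else 0) * X $$ (k, j))"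
    using assms by (simp add: cyclic_shift_mat_def scalar_prod_def)
  also have "\<dots> = X $$ (Suc i mod n, j)"
    using assms(2) by (simp add: if_distrib[of "\<lambda>x. x * _"] cong: if_cong)
  finally show ?thesis .
qed

lemma mult_transpose_cyclic_shift_mat_index:
  assumes "dim_col X = n" "i < dim_row X" "j < n"
  shows "(X * transpose_mat (cyclic_shift_mat n)) $$ (i, j) = X $$ (i, Suc j mod n)"
proof -
  have "(X * transpose_mat (cyclic_shift_mat n)) $$ (i, j)
      = (\<Sum>k\<in>{0..<n}. X $$ (i, k) * (if k = Suc j mod n then 1 else 0))"
    using assms by (simp add: cyclic_shift_mat_def scalar_prod_def)
  also have "\<dots> = X $$ (i, Suc j mod n)"
    using assms(3) by (simp add: if_distrib[of "\<lambda>x. _ * x"] cong: if_cong)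
  finally show ?thesis .
qed

lemma cyclically_invariant_imp_constant:
  assumes invariant: "\<And>k. k < n \<Longrightarrow> f (Suc k mod n) = f k" and "k < n"
  shows "f k = f 0"
  using \<open>k < n\<close>
proof (induction k)
  case (Suc k)
  then show ?case using invariant[of k] by simp
qed simp

definition row_const_mat :: "nat \<Rightarrow> nat \<Rightarrow> 'a vec \<Rightarrow> 'a mat" where
  "row_const_mat r s c = mat r s (\<lambda>(i, j). c $ i)"

definition col_const_mat :: "nat \<Rightarrow> nat \<Rightarrow> 'a vec \<Rightarrow> 'a mat" where
  "col_const_mat r s c = mat r s (\<lambda>(i, j). c $ j)"

lemma mat_weight_row_const_mat:
  "mat_weight (row_const_mat r s c) = s * card {i. i < r \<and> c $ i \<noteq> 0}"
proof -
  let ?X = "row_const_mat r s c"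
  have "{(i, j). i < dim_row ?X \<and> j < dim_col ?X \<and> ?X $$ (i, j) \<noteq> 0}
      = {i. i < r \<and> c $ i \<noteq> 0} \<times> {..<s}"
    by (auto simp: row_const_mat_def)
  then show ?thesis
    by (simp add: mat_weight_def card_cartesian_product)
qed

lemma mat_weight_col_const_mat:
  "mat_weight (col_const_mat r s c) = r * card {j. j < s \<and> c $ j \<noteq> 0}"
proof -
  let ?X = "col_const_mat r s c"
  have "{(i, j). i < dim_row ?X \<and> j < dim_col ?X \<and> ?X $$ (i, j) \<noteq> 0}
      = {..<r} \<times> {j. j < s \<and> c $ j \<noteq> 0}"
    by (auto simp: col_const_mat_def)
  then show ?thesis
    by (simp add: mat_weight_def card_cartesian_product)
qed

lemma centralizer_code_one_cyclic_shift:
  assumes "0 < s"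
  shows "centralizer_code (1\<^sub>m r) (transpose_mat (cyclic_shift_mat s))
    = (row_const_mat r s ` carrier_vec r :: 'a::field mat set)"
proof (intro Set.set_eqI iffI)
  fix X :: "'a mat"
  assume "X \<in> centralizer_code (1\<^sub>m r) (transpose_mat (cyclic_shift_mat s))"
  then have carrier: "X \<in> carrier_mat r s"
    and commute: "1\<^sub>m r * X = X * transpose_mat (cyclic_shift_mat s)"
    by (simp_all add: centralizer_code_def)
  have X: "X \<in> carrier_mat r s" "X * transpose_mat (cyclic_shift_mat s) = X"
    using carrier trans[OF commute[symmetric] left_mult_one_mat[OF carrier]] by simp_all
  have invariant: "X $$ (i, Suc j mod s) = X $$ (i, j)" if "i < r" "j < s" for i j
  proof -
    have "X $$ (i, Suc j mod s) = (X * transpose_mat (cyclic_shift_mat s)) $$ (i, j)"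
      by (rule mult_transpose_cyclic_shift_mat_index[symmetric]) (use X(1) that in auto)
    also have "\<dots> = X $$ (i, j)"
      by (simp only: X(2))
    finally show ?thesis .
  qed
  have row_constant: "X $$ (i, j) = X $$ (i, 0)" if "i < r" "j < s" for i j
    using cyclically_invariant_imp_constant[of s "\<lambda>j. X $$ (i, j)" j] invariant that by blast
  have "X = row_const_mat r s (col X 0)"
  proof (rule eq_matI)
    fix i j assume "i < dim_row (row_const_mat r s (col X 0))" "j < dim_col (row_const_mat r s (col X 0))"
    then have "i < r" "j < s" by (simp_all add: row_const_mat_def)
    then show "X $$ (i, j) = row_const_mat r s (col X 0) $$ (i, j)"
      using row_constant[OF \<open>i < r\<close> \<open>j < s\<close>] X(1) by (simp add: row_const_mat_def)
  qed (use X(1) in \<open>simp_all add: row_const_mat_def\<close>)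
  moreover have "col X 0 \<in> carrier_vec r"
    by (rule col_carrier_vec[OF assms X(1)])
  ultimately show "X \<in> row_const_mat r s ` carrier_vec r"
    by blast
next
  fix X :: "'a mat"
  assume "X \<in> row_const_mat r s ` carrier_vec r"
  then obtain c where X: "X = row_const_mat r s c" by blast
  have "X * transpose_mat (cyclic_shift_mat s) = X"
    unfolding X by (rule eq_matI)
      (auto simp: mult_transpose_cyclic_shift_mat_index row_const_mat_def simp del: index_mult_mat(1))
  then show "X \<in> centralizer_code (1\<^sub>m r) (transpose_mat (cyclic_shift_mat s))"
    by (simp add: centralizer_code_def X row_const_mat_def)
qed

lemma centralizer_code_cyclic_shift_one:
  assumes "0 < r"
  shows "centralizer_code (cyclic_shift_mat r) (1\<^sub>m s)
    = (col_const_mat r s ` carrier_vec s :: 'a::field mat set)"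
proof (intro Set.set_eqI iffI)
  fix X :: "'a mat"
  assume "X \<in> centralizer_code (cyclic_shift_mat r) (1\<^sub>m s)"
  then have carrier: "X \<in> carrier_mat r s"
    and commute: "cyclic_shift_mat r * X = X * 1\<^sub>m s"
    by (simp_all add: centralizer_code_def)
  have X: "X \<in> carrier_mat r s" "cyclic_shift_mat r * X = X"
    using carrier trans[OF commute right_mult_one_mat[OF carrier]] by simp_all
  have invariant: "X $$ (Suc i mod r, j) = X $$ (i, j)" if "i < r" "j < s" for i j
  proof -
    have "X $$ (Suc i mod r, j) = (cyclic_shift_mat r * X) $$ (i, j)"
      by (rule cyclic_shift_mat_mult_index[symmetric]) (use X(1) that in auto)
    also have "\<dots> = X $$ (i, j)"
      by (simp only: X(2))
    finally show ?thesis .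
  qed
  have col_constant: "X $$ (i, j) = X $$ (0, j)" if "i < r" "j < s" for i j
    using cyclically_invariant_imp_constant[of r "\<lambda>i. X $$ (i, j)" i] invariant that by blast
  have "X = col_const_mat r s (row X 0)"
  proof (rule eq_matI)
    fix i j assume "i < dim_row (col_const_mat r s (row X 0))" "j < dim_col (col_const_mat r s (row X 0))"
    then have "i < r" "j < s" by (simp_all add: col_const_mat_def)
    then show "X $$ (i, j) = col_const_mat r s (row X 0) $$ (i, j)"
      using col_constant[OF \<open>i < r\<close> \<open>j < s\<close>] X(1) by (simp add: col_const_mat_def)
  qed (use X(1) in \<open>simp_all add: col_const_mat_def\<close>)
  moreover have "row X 0 \<in> carrier_vec s"
    by (rule row_carrier_vec[OF assms X(1)])
  ultimately show "X \<in> col_const_mat r s ` carrier_vec s"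
    by blast
next
  fix X :: "'a mat"
  assume "X \<in> col_const_mat r s ` carrier_vec s"
  then obtain c where X: "X = col_const_mat r s c" by blast
  have "cyclic_shift_mat r * X = X"
    unfolding X by (rule eq_matI)
      (auto simp: cyclic_shift_mat_mult_index col_const_mat_def simp del: index_mult_mat(1))
  then show "X \<in> centralizer_code (cyclic_shift_mat r) (1\<^sub>m s)"
    by (simp add: centralizer_code_def X col_const_mat_def)
qed

lemma row_const_mat_code:
  assumes "0 < r" "0 < s"
  shows "mat_subspace_dim r s (row_const_mat r s ` carrier_vec r :: 'a::field mat set) = r"
    and "min_distance r s (row_const_mat r s ` carrier_vec r :: 'a mat set) = s"
proof -
  have carrier: "row_const_mat r s c \<in> carrier_mat r s" for c :: "'a vec"
    by (simp add: row_const_mat_def)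
  have add: "row_const_mat r s (u + v) = row_const_mat r s u + row_const_mat r s v"
    if "u \<in> carrier_vec r" "v \<in> carrier_vec r" for u v :: "'a vec"
    using that by (intro eq_matI) (auto simp: row_const_mat_def)
  have smult: "row_const_mat r s (k \<cdot>\<^sub>v u) = k \<cdot>\<^sub>m row_const_mat r s u"
    if "u \<in> carrier_vec r" for k and u :: "'a vec"
    using that by (intro eq_matI) (auto simp: row_const_mat_def)
  from code_with_proportional_weights[where m = r and n = s and r = r and s = s and T = "row_const_mat r s",
      OF carrier add smult mat_weight_row_const_mat assms]
  show "mat_subspace_dim r s (row_const_mat r s ` carrier_vec r :: 'a mat set) = r"
    and "min_distance r s (row_const_mat r s ` carrier_vec r :: 'a mat set) = s"
    by simp_all
qed

lemma col_const_mat_code: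
  assumes "0 < r" "0 < s"
  shows "mat_subspace_dim r s (col_const_mat r s ` carrier_vec s :: 'a::field mat set) = s"
    and "min_distance r s (col_const_mat r s ` carrier_vec s :: 'a mat set) = r"
proof -
  have carrier: "col_const_mat r s c \<in> carrier_mat r s" for c :: "'a vec"
    by (simp add: col_const_mat_def)
  have add: "col_const_mat r s (u + v) = col_const_mat r s u + col_const_mat r s v"
    if "u \<in> carrier_vec s" "v \<in> carrier_vec s" for u v :: "'a vec"
    using that by (intro eq_matI) (auto simp: col_const_mat_def)
  have smult: "col_const_mat r s (k \<cdot>\<^sub>v u) = k \<cdot>\<^sub>m col_const_mat r s u"
    if "u \<in> carrier_vec s" for k and u :: "'a vec"
    using that by (intro eq_matI) (auto simp: col_const_mat_def)
  from code_with_proportional_weights[where m = s and n = r and r = r and s = s and T = "col_const_mat r s",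
      OF carrier add smult mat_weight_col_const_mat assms(2,1)]
  show "mat_subspace_dim r s (col_const_mat r s ` carrier_vec s :: 'a mat set) = s"
    and "min_distance r s (col_const_mat r s ` carrier_vec s :: 'a mat set) = r"
    by simp_all
qed

theorem corollary4p4:
  fixes r s :: nat
  assumes "r \<ge> 1" and "s \<ge> 1"
    and "infinite (UNIV :: 'a::field set) \<or> card (UNIV :: 'a set) \<ge> min r s + 2"
  shows "\<exists>(A :: 'a mat) B. A \<in> carrier_mat r r \<and> B \<in> carrier_mat s s \<and>
           mat_subspace_dim r s (centralizer_code A B) = min r s \<and>
           min_distance r s (centralizer_code A B) = max r s"
proof -
  have "0 < r" "0 < s" using assms(1,2) by simp_all
  show ?thesis
  proof (cases "r \<le> s")
    case True
    let ?A = "1\<^sub>m r :: 'a mat" and ?B = "transpose_mat (cyclic_shift_mat s) :: 'a mat"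
    have "centralizer_code ?A ?B = row_const_mat r s ` carrier_vec r"
      by (rule centralizer_code_one_cyclic_shift[OF \<open>0 < s\<close>])
    then have "mat_subspace_dim r s (centralizer_code ?A ?B) = min r s"
      and "min_distance r s (centralizer_code ?A ?B) = max r s"
      using row_const_mat_code[OF \<open>0 < r\<close> \<open>0 < s\<close>] True by simp_all
    moreover have "?A \<in> carrier_mat r r" "?B \<in> carrier_mat s s"
      by (simp_all add: cyclic_shift_mat_carrier)
    ultimately show ?thesis by blast
  next
    case False
    let ?A = "cyclic_shift_mat r :: 'a mat" and ?B = "1\<^sub>m s :: 'a mat"
    have "centralizer_code ?A ?B = col_const_mat r s ` carrier_vec s"
      by (rule centralizer_code_cyclic_shift_one[OF \<open>0 < r\<close>])
    then have "mat_subspace_dim r s (centralizer_code ?A ?B) = min r s"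
      and "min_distance r s (centralizer_code ?A ?B) = max r s"
      using col_const_mat_code[OF \<open>0 < r\<close> \<open>0 < s\<close>] False by simp_all
    moreover have "?A \<in> carrier_mat r r" "?B \<in> carrier_mat s s"
      by (simp_all add: cyclic_shift_mat_carrier)
    ultimately show ?thesis by blast
  qed
qed

end
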